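(* Let $V\subseteq\mathbb N$ with $|V|\ge 2$, and let $\mathrm{Adm}(V)$ be the set of admissible binary trees with root $V$. Then the map $\mathcal E$ sending $T\in\mathrm{Adm}(V)$ to the edge set $\{\{\min X,\max X\}: X \text{ a node of } T\}$ is a bijection from $\mathrm{Adm}(V)$ onto the set of facets of $\Delta_V$. (Its inverse sends a facet $F$ to its decomposition tree, obtained by recursively applying the decomposition $F=F^1\sqcup F^2\sqcup\{\{\min V,\max V\}\}$ of facets into facets $F^1$ of $\Delta_{V(F^1)}$ and $F^2$ of $\Delta_{V(F^2)}$ with $V(F^1)\cup V(F^2)=V$, $V(F^1)\cap V(F^2)=\{\max V(F^1)\}$, $\min V\in V(F^1)$, $\max V\in V(F^2)$.)
   Context: A path $(v_1,\dots,v_k)$ in an edge set is a sequence of distinct vertices with consecutive ones joined by edges; it is forbidden if $k\ge 4$, $v_1=\max(v_1,\dots,v_k)$, $v_k=\max(v_2,\dots,v_k)$, $v_2>v_{k-1}$. For finite $V\subseteq\mathbb N$, $\Delta_V$ is the simplicial complex on $E(K_V)$ whose faces are edge sets containing no forbidden path. A binary tree is a rooted planar tree in which every node has either zero or two (ordered) children; for a non-leaf node $X$ write $X^{(1)}$ for its older and $X^{(2)}$ for its younger child. An admissible binary tree with root $V$ is a binary tree whose nodes are labeled by subsets of $V$, with root labeled $V$, such that every node $X$ has $|X|\ge 2$, the leaves are exactly the nodes with $|X|=2$, and every non-leaf node $X$ satisfies: (a) $\min X\in X^{(1)}\setminus X^{(2)}$; (b) $\max X\in X^{(2)}\setminus X^{(1)}$;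 (c) $X^{(1)}\cup X^{(2)}=X$; (d) $X^{(1)}\cap X^{(2)}=\{\max X^{(1)}\}$. *)

theory Defs
  imports Main
begin

definition edges_K :: "nat set \<Rightarrow> nat set set" where
  "edges_K V = {e. e \<subseteq> V \<and> card e = 2}"

definition is_path :: "nat set set \<Rightarrow> nat list \<Rightarrow> bool" where
  "is_path F vs \<longleftrightarrow> vs \<noteq> [] \<and> distinct vs \<and>
     (\<forall>i. Suc i < length vs \<longrightarrow> {vs ! i, vs ! Suc i} \<in> F)"

definition forbidden_path :: "nat set set \<Rightarrow> nat list \<Rightarrow> bool" where
  "forbidden_path F vs \<longleftrightarrow> is_path F vs \<and> length vs \<ge> 4 \<and>
     hd vs = Max (set vs) \<and> last vs = Max (set (tl vs)) \<and>
     vs ! 1 > vs ! (length vs - 2)"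

definition is_face :: "nat set \<Rightarrow> nat set set \<Rightarrow> bool" where
  "is_face V F \<longleftrightarrow> F \<subseteq> edges_K V \<and> (\<nexists>vs. forbidden_path F vs)"

definition facets :: "nat set \<Rightarrow> nat set set set" where
  "facets V = {F. is_face V F \<and> (\<forall>G. is_face V G \<and> F \<subseteq> G \<longrightarrow> G = F)}"

text \<open>Binary trees whose nodes are labelled by sets; every node has zero or two
  ordered children (first = older child, second = younger child).\<close>
datatype btree = Leaf "nat set" | Node "nat set" btree btree

fun label :: "btree \<Rightarrow> nat set" where
  "label (Leaf X) = X"
| "label (Node X t1 t2) = X"

fun nodes :: "btree \<Rightarrow> nat set set" where
  "nodes (Leaf X) = {X}"
| "nodes (Node X t1 t2) = insert X (nodes t1 \<union> nodes t2)"

fun admissible :: "btree \<Rightarrow> bool" where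
  "admissible (Leaf X) \<longleftrightarrow> card X = 2"
| "admissible (Node X t1 t2) \<longleftrightarrow>
     card X \<ge> 2 \<and> card X \<noteq> 2 \<and>
     (let X1 = label t1; X2 = label t2 in
        Min X \<in> X1 - X2 \<and> Max X \<in> X2 - X1 \<and> X1 \<union> X2 = X \<and> X1 \<inter> X2 = {Max X1}) \<and>
     admissible t1 \<and> admissible t2"

definition Adm :: "nat set \<Rightarrow> btree set" where
  "Adm V = {T. admissible T \<and> label T = V}"

definition edge_map :: "btree \<Rightarrow> nat set set" where
  "edge_map T = (\<lambda>X. {Min X, Max X}) ` nodes T"

end

theory Submission
  imports Defs
begin

text \<open>
  The edge set of an admissible tree contains no forbidden path. By induction on the tree: a
  forbidden path inside X cannot use the root edge {min X, max X}, and a path whose edges lie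
  in X1 or in X2 cannot switch sides, since it would have to pass through max X1, which lies
  below both end vertices of a forbidden path.

  Conversely every face F of Delta_V lies in the edge set of some tree. Let m be the largest
  neighbour of min V other than max V, and D the set of vertices reachable from min V along
  paths of F below m. An edge of F from D to a vertex above m would close a forbidden path, so
  apart from {min V, max V} every edge of F lies within V1 = D plus m or within V2 = V minus D;
  recurse on the two parts.

  All trees on V have 2|V| - 3 edges, so their edge sets are exactly the facets. The tree is
  recovered from its edge set: max X1 is the largest neighbour of min X other than max X, by
  connectivity this determines X1, and then X2.
\<close>

lemma card_2_Min_Max: "card X = 2 \<Longrightarrow> X = {Min X, Max X} \<and> Min X < Max X"
proof -
  assume "card X = 2"
  then obtain x y where "X = {x, y}" "x \<noteq> y" by (auto simp: card_2_iff)
  then show ?thesis by (cases "x < y") (auto simp: min_def max_def)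
qed

lemma card_le_1_if_subset_singleton: "e \<subseteq> {x} \<Longrightarrow> card e \<le> 1"
  using card_mono[of "{x}" e] by simp

section \<open>Splitting a vertex set\<close>

locale vertex_split =
  fixes X X1 X2 :: "nat set"
  assumes finite: "finite X"
    and Min_in_first: "Min X \<in> X1 - X2"
    and Max_in_second: "Max X \<in> X2 - X1"
    and union: "X1 \<union> X2 = X"
    and inter: "X1 \<inter> X2 = {Max X1}"
begin

lemma parts_subset: "X1 \<subseteq> X" "X2 \<subseteq> X"
  using union by blast+

lemma finite_parts: "finite X1" "finite X2"
  using parts_subset finite finite_subset by blast+

lemma Max_first_in_both: "Max X1 \<in> X1" "Max X1 \<in> X2"
  using inter by blast+

lemma Min_first: "Min X1 = Min X"
  using Min_in_first parts_subset finite by (intro Min_eqI finite_parts) auto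

lemma Max_second: "Max X2 = Max X"
  using Max_in_second parts_subset finite by (intro Max_eqI finite_parts) auto

lemma Min_neq_Max: "Min X \<noteq> Max X"
  using Min_in_first Max_in_second by auto

lemma Max_first_neq: "Max X1 \<noteq> Max X" "Max X1 \<noteq> Min X"
  using Max_first_in_both Min_in_first Max_in_second by auto

lemma card_parts_less: "card X1 < card X" "card X2 < card X"
proof -
  have "X1 \<subset> X" "X2 \<subset> X"
    using parts_subset Min_in_first Max_in_second by blast+
  then show "card X1 < card X" "card X2 < card X"
    using psubset_card_mono[OF finite] by blast+
qed

lemma two_le_card_parts: "2 \<le> card X1" "2 \<le> card X2"
proof -
  have "{Min X, Max X1} \<subseteq> X1" "{Max X1, Max X} \<subseteq> X2"
    using Min_in_first Max_in_second Max_first_in_both by auto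
  then have "card {Min X, Max X1} \<le> card X1" "card {Max X1, Max X} \<le> card X2"
    using card_mono finite_parts by blast+
  then show "2 \<le> card X1" "2 \<le> card X2"
    using Max_first_neq by simp_all
qed

lemma card_parts: "card X1 + card X2 = card X + 1"
  using card_Un_Int[OF finite_parts] union inter by simp

lemma second_eq: "X2 = insert (Max X1) (X - X1)"
  using union inter by blast

lemma edges_K_disjoint: "edges_K X1 \<inter> edges_K X2 = {}"
proof (rule equals0I)
  fix e assume "e \<in> edges_K X1 \<inter> edges_K X2"
  then have "e \<subseteq> {Max X1}" and "card e = 2"
    unfolding edges_K_def inter[symmetric] by auto
  then show False using card_le_1_if_subset_singleton by fastforce
qed

lemma root_edge_notin_edges_K: "{Min X, Max X} \<notin> edges_K X1" "{Min X, Max X} \<notin> edges_K X2"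
  using Min_in_first Max_in_second unfolding edges_K_def by blast+

end

section \<open>Edge sets of admissible trees\<close>

lemma admissible_Node_iff:
  "admissible (Node X t1 t2) \<longleftrightarrow>
     3 \<le> card X \<and> vertex_split X (label t1) (label t2) \<and> admissible t1 \<and> admissible t2"
proof -
  have "2 \<le> card X \<and> card X \<noteq> 2 \<longleftrightarrow> 3 \<le> card X" by auto
  moreover have "3 \<le> card X \<Longrightarrow> finite X" by (rule card_ge_0_finite) simp
  ultimately show ?thesis
    unfolding admissible.simps vertex_split_def Let_def Diff_iff by blast
qed

lemma admissible_NodeD:
  assumes "admissible (Node X t1 t2)"
  shows "3 \<le> card X" "vertex_split X (label t1) (label t2)" "admissible t1" "admissible t2"
  using assms unfolding admissible_Node_iff by simp_all

lemma admissible_card_label: "admissible t \<Longrightarrow> 2 \<le> card (label t)"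
  by (cases t) auto

lemma edge_map_Leaf [simp]: "edge_map (Leaf X) = {{Min X, Max X}}"
  by (simp add: edge_map_def)

lemma edge_map_Node [simp]:
  "edge_map (Node X t1 t2) = insert {Min X, Max X} (edge_map t1 \<union> edge_map t2)"
  by (simp add: edge_map_def image_Un)

lemma finite_edge_map: "finite (edge_map t)"
  by (induction t) auto

lemma root_edge_in_edge_map: "{Min (label t), Max (label t)} \<in> edge_map t"
  by (cases t) auto

lemma edge_map_subset_edges_K: "admissible t \<Longrightarrow> edge_map t \<subseteq> edges_K (label t)"
proof (induction t)
  case (Leaf X)
  then show ?case using card_2_Min_Max[of X] by (auto simp: edges_K_def)
next
  case (Node X t1 t2)
  note adm = admissible_NodeD[OF Node.prems]
  interpret vertex_split X "label t1" "label t2" by (fact adm(2))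
  have "{Min X, Max X} \<in> edges_K X"
    using Min_neq_Max Min_in_first Max_in_second parts_subset by (auto simp: edges_K_def)
  moreover have "edges_K (label t1) \<union> edges_K (label t2) \<subseteq> edges_K X"
    using parts_subset by (auto simp: edges_K_def)
  moreover have "edge_map t1 \<subseteq> edges_K (label t1)" "edge_map t2 \<subseteq> edges_K (label t2)"
    using Node.IH adm(3,4) by simp_all
  ultimately show ?case by auto
qed

lemma edge_map_child_eq:
  assumes "admissible (Node X t1 t2)"
  shows "edge_map t1 = {e \<in> edge_map (Node X t1 t2). e \<subseteq> label t1}"
    and "edge_map t2 = {e \<in> edge_map (Node X t1 t2). e \<subseteq> label t2}"
proof -
  note adm = admissible_NodeD[OF assms]
  interpret vertex_split X "label t1" "label t2" by (fact adm(2))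
  have restrict: "{e \<in> edge_map (Node X t1 t2). e \<subseteq> W} =
      insert {Min X, Max X} (edge_map t1 \<union> edge_map t2) \<inter> edges_K W" for W
    using edge_map_subset_edges_K[OF assms] by (auto simp: edges_K_def)
  have part: "insert r (E \<union> E') \<inter> K = E" if "E \<subseteq> K" "E' \<inter> K = {}" "r \<notin> K"
    for r :: "nat set" and E E' K using that by blast
  have E1: "edge_map t1 \<subseteq> edges_K (label t1)" and E2: "edge_map t2 \<subseteq> edges_K (label t2)"
    using edge_map_subset_edges_K adm(3,4) by blast+
  show "edge_map t1 = {e \<in> edge_map (Node X t1 t2). e \<subseteq> label t1}"
    unfolding restrict using E1 E2 edges_K_disjoint root_edge_notin_edges_K(1)
    by (intro part[symmetric]) blast+
  show "edge_map t2 = {e \<in> edge_map (Node X t1 t2). e \<subseteq> label t2}"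
    unfolding restrict Un_commute[of "edge_map t1"]
    using E1 E2 edges_K_disjoint root_edge_notin_edges_K(2)
    by (intro part[symmetric]) blast+
qed

lemma card_edge_map: "admissible t \<Longrightarrow> card (edge_map t) + 3 = 2 * card (label t)"
proof (induction t)
  case (Leaf X)
  then show ?case by simp
next
  case (Node X t1 t2)
  note adm = admissible_NodeD[OF Node.prems]
  interpret vertex_split X "label t1" "label t2" by (fact adm(2))
  have "{Min X, Max X} \<notin> edge_map t1 \<union> edge_map t2" "edge_map t1 \<inter> edge_map t2 = {}"
    using edge_map_subset_edges_K[OF adm(3)] edge_map_subset_edges_K[OF adm(4)]
      edges_K_disjoint root_edge_notin_edges_K by blast+
  then have "card (edge_map (Node X t1 t2)) = Suc (card (edge_map t1) + card (edge_map t2))"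
    by (simp add: finite_edge_map card_Un_disjoint)
  then show ?case using Node.IH adm card_parts by simp
qed

section \<open>Forbidden paths\<close>

lemma is_path_iff_successively:
  "is_path F vs \<longleftrightarrow> vs \<noteq> [] \<and> distinct vs \<and> successively (\<lambda>x y. {x, y} \<in> F) vs"
  unfolding is_path_def successively_conv_nth by simp

lemma forbidden_path_mono:
  "forbidden_path F vs \<Longrightarrow> successively (\<lambda>x y. {x, y} \<in> G) vs \<Longrightarrow> forbidden_path G vs"
  by (simp add: forbidden_path_def is_path_iff_successively)

lemma forbidden_path_restrict:
  assumes "forbidden_path F vs" "set vs \<subseteq> W"
  shows "forbidden_path {e \<in> F. e \<subseteq> W} vs"
proof -
  have "successively (\<lambda>x y. {x, y} \<in> F) vs"
    using assms(1) by (simp add: forbidden_path_def is_path_iff_successively)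
  then have "successively (\<lambda>x y. {x, y} \<in> {e \<in> F. e \<subseteq> W}) vs"
    by (rule successively_mono) (use assms(2) in auto)
  with assms(1) show ?thesis by (rule forbidden_path_mono)
qed

lemma forbidden_path_ConsE:
  assumes "forbidden_path F vs"
  obtains y x rest where "vs = y # x # rest"
proof -
  have "4 \<le> length vs" using assms by (simp add: forbidden_path_def)
  then show ?thesis using that by (auto simp: numeral_eq_Suc Suc_le_length_iff)
qed

lemma successively_edges_vertices:
  "successively (\<lambda>x y. {x, y} \<in> F) (v # w # vs) \<Longrightarrow> set (v # w # vs) \<subseteq> \<Union>F"
  by (induction vs arbitrary: v w) auto

lemma forbidden_path_vertices:
  assumes "forbidden_path F vs"
  shows "set vs \<subseteq> \<Union>F"
proof -
  obtain y x rest where vs: "vs = y # x # rest"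
    using assms by (rule forbidden_path_ConsE)
  have "successively (\<lambda>x y. {x, y} \<in> F) (y # x # rest)"
    using assms vs by (simp add: forbidden_path_def is_path_iff_successively)
  then show ?thesis unfolding vs by (rule successively_edges_vertices)
qed

lemma forbidden_path_avoids_root_edge:
  assumes fp: "forbidden_path (insert {Min X, Max X} F) vs" and X: "finite X" "set vs \<subseteq> X"
  shows "successively (\<lambda>x y. {x, y} \<in> F) vs"
proof -
  obtain y x rest where vs: "vs = y # x # rest"
    using fp by (rule forbidden_path_ConsE)
  have y_max: "y = Max (set vs)" and w_less: "vs ! (length vs - 2) < x"
    and dist: "distinct vs" and succ: "successively (\<lambda>u v. {u, v} \<in> insert {Min X, Max X} F) vs"
    using fp vs by (simp_all add: forbidden_path_def is_path_iff_successively)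
  have Max_notin: "Max X \<notin> set (x # rest)"
  proof
    assume Max_in: "Max X \<in> set (x # rest)"
    then have "Max X \<le> Max (set vs)" using vs by (simp del: Max_insert)
    moreover have "y \<le> Max X" using X vs by simp
    ultimately have "Max X = y" using y_max by simp
    with Max_in show False using dist vs by simp
  qed
  have "{y, x} \<noteq> {Min X, Max X}"
  proof
    assume "{y, x} = {Min X, Max X}"
    then have "x = Min X" using Max_notin by (auto simp: doubleton_eq_iff)
    have "vs ! (length vs - 2) \<in> X"
      using X(2) nth_mem[of "length vs - 2" vs] vs by auto
    then have "Min X \<le> vs ! (length vs - 2)" using X(1) by simp
    with \<open>x = Min X\<close> show False using w_less by simp
  qed
  then have "{y, x} \<in> F" using succ vs by simp
  moreover have "successively (\<lambda>u v. {u, v} \<in> F) (x # rest)"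
  proof (rule successively_mono)
    show "successively (\<lambda>u v. {u, v} \<in> insert {Min X, Max X} F) (x # rest)"
      using succ vs by simp
    fix u v assume "u \<in> set (x # rest)" "v \<in> set (x # rest)"
      and "{u, v} \<in> insert {Min X, Max X} F"
    then show "{u, v} \<in> F" using Max_notin by (auto simp: doubleton_eq_iff)
  qed
  ultimately show ?thesis using vs by simp
qed

lemma successively_one_side:
  assumes "successively (\<lambda>x y. {x, y} \<subseteq> A \<or> {x, y} \<subseteq> B) xs"
    and "set xs \<subseteq> A \<union> B" and "A \<inter> B \<inter> set xs = {}"
  shows "set xs \<subseteq> A \<or> set xs \<subseteq> B"
  using assms
proof (induction xs rule: induct_list012)
  case (3 x y zs)
  have "set (y # zs) \<subseteq> A \<or> set (y # zs) \<subseteq> B"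
    using "3.prems" by (intro "3.IH"(2)) auto
  moreover have "{x, y} \<subseteq> A \<or> {x, y} \<subseteq> B" and "y \<notin> A \<inter> B"
    using "3.prems" by auto
  ultimately show ?case by auto
qed auto

lemma forbidden_path_one_side:
  assumes fp: "forbidden_path F vs" and F: "\<forall>e\<in>F. e \<subseteq> A \<or> e \<subseteq> B"
    and AB: "A \<inter> B = {m}" and A_le: "\<forall>x\<in>A. x \<le> m"
  shows "set vs \<subseteq> A \<or> set vs \<subseteq> B"
proof -
  have dist: "distinct vs" and hd: "hd vs = Max (set vs)" and last: "last vs = Max (set (tl vs))"
    and succ: "successively (\<lambda>x y. {x, y} \<in> F) vs"
    using fp by (simp_all add: forbidden_path_def is_path_iff_successively)
  from succ have sides: "successively (\<lambda>x y. {x, y} \<subseteq> A \<or> {x, y} \<subseteq> B) vs"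
    by (rule successively_mono) (use F in blast)
  have AB_cover: "set vs \<subseteq> A \<union> B"
    using forbidden_path_vertices[OF fp] F by blast
  show ?thesis
  proof (cases "m \<in> set vs")
    case False
    then have "A \<inter> B \<inter> set vs = {}" using AB by simp
    then show ?thesis by (rule successively_one_side[OF sides AB_cover])
  next
    case True
    then obtain us ws where vs: "vs = us @ m # ws" by (meson split_list)
    have m_notin: "m \<notin> set us" "m \<notin> set ws" using dist vs by auto
    have "successively (\<lambda>x y. {x, y} \<subseteq> A \<or> {x, y} \<subseteq> B) us"
      and "set us \<subseteq> A \<union> B" and "A \<inter> B \<inter> set us = {}"
      using sides AB_cover m_notin AB vs by (auto simp: successively_append_iff)
    then have us: "set us \<subseteq> A \<or> set us \<subseteq> B" by (rule successively_one_side)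
    have "successively (\<lambda>x y. {x, y} \<subseteq> A \<or> {x, y} \<subseteq> B) ws"
      and "set ws \<subseteq> A \<union> B" and "A \<inter> B \<inter> set ws = {}"
      using sides AB_cover m_notin AB vs by (auto simp: successively_append_iff successively_Cons)
    then have ws: "set ws \<subseteq> A \<or> set ws \<subseteq> B" by (rule successively_one_side)
    have m_AB: "m \<in> A" "m \<in> B" using AB by auto
    show ?thesis
    proof (cases "us = [] \<or> ws = []")
      case True
      then show ?thesis using us ws m_AB vs by auto
    next
      case False
      have "hd us \<noteq> m" "last ws \<noteq> m" using False m_notin by auto
      moreover have "m \<le> hd us"
      proof -
        have "m \<le> Max (set vs)" using True by simp
        then show ?thesis using hd False vs by simp
      qed
      moreover have "m \<le> last ws"
      proof -
        have "m \<in> set (tl vs)" using False vs by (cases us) auto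
        then have "m \<le> Max (set (tl vs))" by simp
        then show ?thesis using last False vs by simp
      qed
      ultimately have "\<not> hd us \<le> m" "\<not> last ws \<le> m" by simp_all
      then have "hd us \<notin> A" "last ws \<notin> A" using A_le by blast+
      moreover have "hd us \<in> set us" "last ws \<in> set ws" using False by simp_all
      ultimately have "set us \<subseteq> B" "set ws \<subseteq> B" using us ws by blast+
      then show ?thesis using m_AB vs by auto
    qed
  qed
qed

lemma edge_map_no_forbidden_path: "admissible t \<Longrightarrow> \<not> forbidden_path (edge_map t) vs"
proof (induction t arbitrary: vs)
  case (Leaf X)
  show ?case
  proof
    assume fp: "forbidden_path (edge_map (Leaf X)) vs"
    have "set vs \<subseteq> X"
      using forbidden_path_vertices[OF fp] card_2_Min_Max[of X] Leaf.prems by simp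
    then have "length vs \<le> 2"
      using fp card_mono[of X "set vs"] card_ge_0_finite[of X] Leaf.prems
      by (simp add: forbidden_path_def is_path_iff_successively distinct_card)
    then show False using fp by (simp add: forbidden_path_def)
  qed
next
  case (Node X t1 t2)
  note adm = admissible_NodeD[OF Node.prems]
  interpret vertex_split X "label t1" "label t2" by (fact adm(2))
  show ?case
  proof
    assume fp: "forbidden_path (edge_map (Node X t1 t2)) vs"
    have "set vs \<subseteq> X"
      using forbidden_path_vertices[OF fp] edge_map_subset_edges_K[OF Node.prems]
      by (auto simp: edges_K_def)
    moreover have "forbidden_path (insert {Min X, Max X} (edge_map t1 \<union> edge_map t2)) vs"
      using fp by simp
    ultimately have "successively (\<lambda>x y. {x, y} \<in> edge_map t1 \<union> edge_map t2) vs"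
      using finite by (blast intro: forbidden_path_avoids_root_edge)
    with fp have fp12: "forbidden_path (edge_map t1 \<union> edge_map t2) vs"
      by (rule forbidden_path_mono)
    have "\<forall>e \<in> edge_map t1 \<union> edge_map t2. e \<subseteq> label t1 \<or> e \<subseteq> label t2"
      using edge_map_subset_edges_K adm(3,4) by (auto simp: edges_K_def)
    moreover have "\<forall>x \<in> label t1. x \<le> Max (label t1)"
      using finite_parts by simp
    ultimately have "set vs \<subseteq> label t1 \<or> set vs \<subseteq> label t2"
      using forbidden_path_one_side[OF fp12 _ inter] by blast
    then show False
    proof
      assume "set vs \<subseteq> label t1"
      then have "forbidden_path (edge_map t1) vs"
        by (subst edge_map_child_eq(1)[OF Node.prems]) (rule forbidden_path_restrict[OF fp])
      then show False using Node.IH(1) adm(3) by blast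
    next
      assume "set vs \<subseteq> label t2"
      then have "forbidden_path (edge_map t2) vs"
        by (subst edge_map_child_eq(2)[OF Node.prems]) (rule forbidden_path_restrict[OF fp])
      then show False using Node.IH(2) adm(4) by blast
    qed
  qed
qed

lemma is_face_edge_map: "admissible t \<Longrightarrow> is_face (label t) (edge_map t)"
  unfolding is_face_def using edge_map_subset_edges_K edge_map_no_forbidden_path by blast

section \<open>Every face lies in the edge set of a tree\<close>

lemma is_face_subset:
  assumes "is_face V F" "G \<subseteq> F" "G \<subseteq> edges_K W"
  shows "is_face W G"
proof -
  have "forbidden_path F vs" if "forbidden_path G vs" for vs
  proof (rule forbidden_path_mono[OF that])
    show "successively (\<lambda>x y. {x, y} \<in> F) vs"
      using that assms(2) by (auto simp: forbidden_path_def is_path_iff_successively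
          elim: successively_mono)
  qed
  then show ?thesis using assms(1,3) unfolding is_face_def by blast
qed

lemma forbidden_path_of_low_path:
  assumes path: "is_path F vs" and ends: "hd vs = a" "last vs = x" "a < x"
    and low: "\<forall>v\<in>set vs. v < m" and "m < y" and edges: "{x, y} \<in> F" "{a, m} \<in> F"
  shows "forbidden_path F (y # rev vs @ [m])"
proof -
  have dist: "distinct vs" and succ: "successively (\<lambda>u v. {u, v} \<in> F) vs"
    using path by (simp_all add: is_path_iff_successively)
  obtain ws where vs: "vs = a # ws @ [x]"
  proof (cases vs rule: rev_cases)
    case (snoc us u)
    with ends that show ?thesis by (cases us) auto
  qed (use path in \<open>simp add: is_path_def\<close>)
  have rev_ends: "rev vs \<noteq> []" "hd (rev vs) = x" "last (rev vs) = a"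
    using vs by simp_all
  have "successively (\<lambda>u v. {u, v} \<in> F) (rev vs)"
    using succ by (simp add: insert_commute)
  then have "successively (\<lambda>u v. {u, v} \<in> F) (y # rev vs @ [m])"
    using rev_ends edges by (simp add: successively_append_iff successively_Cons insert_commute)
  moreover have "distinct (y # rev vs @ [m])"
    using dist low \<open>m < y\<close> by auto
  moreover have "Max (set (y # rev vs @ [m])) = y"
    using low \<open>m < y\<close> by (intro Max_eqI) auto
  moreover have "Max (set (rev vs @ [m])) = m"
    using low by (intro Max_eqI) (auto simp: less_imp_le)
  moreover have "(y # rev vs @ [m]) ! 1 = x" "(y # rev vs @ [m]) ! (length vs) = a"
    using vs by (simp_all add: nth_append)
  moreover have "2 \<le> length vs" using vs by simp
  ultimately show ?thesis
    using \<open>a < x\<close> by (simp add: forbidden_path_def is_path_iff_successively)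
qed

definition reach_below :: "nat set set \<Rightarrow> nat \<Rightarrow> nat \<Rightarrow> nat set" where
  "reach_below F a m = {x. \<exists>vs. is_path F vs \<and> hd vs = a \<and> last vs = x \<and> (\<forall>v\<in>set vs. v < m)}"

lemma reach_below_less: "x \<in> reach_below F a m \<Longrightarrow> x < m"
  unfolding reach_below_def is_path_def by force

lemma start_in_reach_below: "a < m \<Longrightarrow> a \<in> reach_below F a m"
  unfolding reach_below_def by (intro CollectI exI[of _ "[a]"]) (simp add: is_path_def)

lemma reach_below_subset:
  assumes "F \<subseteq> edges_K V" "a \<in> V"
  shows "reach_below F a m \<subseteq> V"
proof
  fix x assume "x \<in> reach_below F a m"
  then obtain vs where path: "is_path F vs" "hd vs = a" "last vs = x"
    unfolding reach_below_def by blast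
  show "x \<in> V"
  proof (cases vs rule: remdups_adj.cases)
    case (3 v w rest)
    have "successively (\<lambda>x y. {x, y} \<in> F) (v # w # rest)"
      using path(1) unfolding 3 is_path_iff_successively by blast
    then have "set vs \<subseteq> \<Union>F" unfolding 3 by (rule successively_edges_vertices)
    moreover have "\<Union>F \<subseteq> V" using assms(1) by (auto simp: edges_K_def)
    moreover have "x \<in> set vs" using path(3) 3 last_in_set by blast
    ultimately show ?thesis by blast
  qed (use path assms(2) in \<open>auto simp: is_path_def\<close>)
qed

lemma reach_below_extend:
  assumes "x \<in> reach_below F a m" "{x, y} \<in> F" "y < m"
  shows "y \<in> reach_below F a m"
proof -
  obtain vs where path: "is_path F vs" and ends: "hd vs = a" "last vs = x"
    and low: "\<forall>v\<in>set vs. v < m"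
    using assms(1) unfolding reach_below_def by blast
  have ne: "vs \<noteq> []" and dist: "distinct vs" and succ: "successively (\<lambda>u v. {u, v} \<in> F) vs"
    using path by (simp_all add: is_path_iff_successively)
  show ?thesis
  proof (cases "y \<in> set vs")
    case True
    then obtain us ws where vs: "vs = (us @ [y]) @ ws" by (auto dest: split_list)
    then have "is_path F (us @ [y])"
      using dist succ by (simp add: is_path_iff_successively successively_append_iff del: append_assoc)
    moreover have "hd (us @ [y]) = a" using ends vs by (cases us) auto
    ultimately show ?thesis
      using low vs unfolding reach_below_def by (intro CollectI exI[of _ "us @ [y]"]) auto
  next
    case False
    then have "is_path F (vs @ [y])"
      using ne dist succ ends assms(2) by (simp add: is_path_iff_successively successively_append_iff)
    then show ?thesis
      using ne ends low assms(3) unfolding reach_below_def by (intro CollectI exI[of _ "vs @ [y]"]) auto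
  qed
qed

lemma face_reach_below_bounded:
  assumes face: "is_face V F" and fin: "finite V" and m: "m \<in> V" "Min V < m"
    and top: "\<And>y. {Min V, y} \<in> F \<Longrightarrow> y \<noteq> Max V \<Longrightarrow> y \<le> m \<and> {Min V, m} \<in> F"
    and x: "x \<in> reach_below F (Min V) m" and xy: "{x, y} \<in> F" "{x, y} \<noteq> {Min V, Max V}"
  shows "y \<le> m"
proof (rule ccontr)
  assume "\<not> y \<le> m"
  then have "m < y" by simp
  obtain vs where path: "is_path F vs" and ends: "hd vs = Min V" "last vs = x"
    and low: "\<forall>v\<in>set vs. v < m"
    using x unfolding reach_below_def by blast
  have F_V: "F \<subseteq> edges_K V" using face by (simp add: is_face_def)
  show False
  proof (cases "x = Min V")
    case True
    then have "y \<noteq> Max V" using xy(2) by auto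
    then show False using top xy(1) True \<open>m < y\<close> by fastforce
  next
    case False
    have "x \<in> V"
      using x reach_below_subset[OF F_V] fin m by (metis Min_in empty_iff subsetD)
    then have "Min V < x" using False fin by (simp add: order_less_le)
    obtain w rest where vs: "vs = Min V # w # rest"
      using path ends False by (cases vs; cases "tl vs") (auto simp: is_path_def)
    have "{Min V, w} \<in> F"
      using path vs by (simp add: is_path_iff_successively)
    moreover have "w \<noteq> Max V"
      using low vs m fin by (metis Max_ge list.set_intros not_le)
    ultimately have "{Min V, m} \<in> F" using top by blast
    then have "forbidden_path F (y # rev vs @ [m])"
      using forbidden_path_of_low_path[OF path ends \<open>Min V < x\<close> low \<open>m < y\<close> xy(1)] by blast
    then show False using face by (simp add: is_face_def)
  qed
qed

lemma face_split_vertex_exists: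
  assumes face: "is_face V F" and fin: "finite V" and card: "3 \<le> card V"
  obtains m where "m \<in> V" "Min V < m" "m < Max V"
    and "\<And>y. {Min V, y} \<in> F \<Longrightarrow> y \<noteq> Max V \<Longrightarrow> y \<le> m \<and> {Min V, m} \<in> F"
proof -
  have inner: "Min V < y \<and> y < Max V" if "y \<in> V - {Min V, Max V}" for y
    using that fin by (auto simp: order_less_le)
  define N where "N = {y. {Min V, y} \<in> F \<and> y \<noteq> Max V}"
  have "N \<subseteq> V - {Min V, Max V}"
    using face unfolding N_def is_face_def edges_K_def by (auto simp: card_insert_if)
  show ?thesis
  proof (cases "N = {}")
    case True
    have "card {Min V, Max V} < card V" using card by (simp add: card_insert_if)
    then have "\<not> V \<subseteq> {Min V, Max V}" using card_mono[of "{Min V, Max V}" V] by auto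
    then obtain c where "c \<in> V - {Min V, Max V}" by blast
    then show ?thesis using that inner True unfolding N_def by blast
  next
    case False
    have "finite N" using \<open>N \<subseteq> _\<close> fin finite_subset by blast
    then have "Max N \<in> N" "\<And>y. y \<in> N \<Longrightarrow> y \<le> Max N" using False by simp_all
    then show ?thesis using that inner \<open>N \<subseteq> _\<close> unfolding N_def by blast
  qed
qed

lemma face_split:
  assumes face: "is_face V F" and fin: "finite V" and card: "3 \<le> card V"
  obtains V1 V2 where "vertex_split V V1 V2"
    and "\<And>e. e \<in> F \<Longrightarrow> e \<noteq> {Min V, Max V} \<Longrightarrow> e \<subseteq> V1 \<or> e \<subseteq> V2"
proof -
  obtain m where m: "m \<in> V" "Min V < m" "m < Max V"
    and top: "\<And>y. {Min V, y} \<in> F \<Longrightarrow> y \<noteq> Max V \<Longrightarrow> y \<le> m \<and> {Min V, m} \<in> F"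
    using face_split_vertex_exists[OF face fin card] by blast
  define D where "D = reach_below F (Min V) m"
  have F_V: "F \<subseteq> edges_K V" using face by (simp add: is_face_def)
  have "V \<noteq> {}" using m by blast
  then have D_V: "D \<subseteq> V" unfolding D_def using reach_below_subset[OF F_V] fin by simp
  have D_less: "x < m" if "x \<in> D" for x using that reach_below_less unfolding D_def by blast
  have Min_D: "Min V \<in> D" unfolding D_def using m(2) by (rule start_in_reach_below)
  have "finite D" using D_V fin finite_subset by blast
  then have Max_first: "Max (insert m D) = m" using D_less by (intro Max_eqI) (auto simp: less_imp_le)
  have split: "vertex_split V (insert m D) (V - D)"
  proof
    show "Max V \<in> (V - D) - insert m D"
      using Max_in[OF fin \<open>V \<noteq> {}\<close>] D_less[of "Max V"] m(3) by auto
    have "m \<notin> D" using D_less by blast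
    then show "insert m D \<inter> (V - D) = {Max (insert m D)}" unfolding Max_first using m(1) by blast
  qed (use fin Min_D D_V m(1) in auto)
  have low_side: "y \<in> insert m D" if "x \<in> D" "{x, y} \<in> F" "{x, y} \<noteq> {Min V, Max V}" for x y
  proof -
    have "y \<le> m"
      using face_reach_below_bounded[OF face fin m(1,2) top] that unfolding D_def by blast
    then show ?thesis
      using reach_below_extend[of x F "Min V" m y] that unfolding D_def by (cases "y = m") auto
  qed
  have "e \<subseteq> insert m D \<or> e \<subseteq> V - D" if "e \<in> F" "e \<noteq> {Min V, Max V}" for e
  proof -
    have "e \<subseteq> V" "card e = 2" using that(1) F_V by (auto simp: edges_K_def)
    then obtain x y where e: "e = {x, y}" by (meson card_2_iff)
    show ?thesis
    proof (cases "x \<in> D \<or> y \<in> D")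
      case True
      then have "x \<in> insert m D" "y \<in> insert m D"
        using low_side[of x y] low_side[of y x] that e by (auto simp: insert_commute)
      then show ?thesis using e by blast
    next
      case False
      then show ?thesis using \<open>e \<subseteq> V\<close> e by blast
    qed
  qed
  with split show ?thesis using that by blast
qed

lemma face_subset_edge_map:
  assumes "finite V" "2 \<le> card V" "is_face V F"
  shows "\<exists>T. admissible T \<and> label T = V \<and> F \<subseteq> edge_map T"
  using assms
proof (induction "card V" arbitrary: V F rule: less_induct)
  case less
  have F_V: "F \<subseteq> edges_K V" using less.prems(3) by (simp add: is_face_def)
  show ?case
  proof (cases "card V = 2")
    case True
    have "F \<subseteq> {V}"
    proof
      fix e assume "e \<in> F"
      then have "e \<subseteq> V" "card e = card V" using F_V True by (auto simp: edges_K_def)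
      then show "e \<in> {V}" using card_subset_eq[OF less.prems(1)] by blast
    qed
    then show ?thesis
      using True card_2_Min_Max[OF True] by (intro exI[of _ "Leaf V"]) auto
  next
    case False
    then have card: "3 \<le> card V" using less.prems(2) by simp
    obtain V1 V2 where split: "vertex_split V V1 V2"
      and sides: "\<And>e. e \<in> F \<Longrightarrow> e \<noteq> {Min V, Max V} \<Longrightarrow> e \<subseteq> V1 \<or> e \<subseteq> V2"
      using face_split[OF less.prems(3,1) card] by blast
    interpret vertex_split V V1 V2 by (fact split)
    have "is_face V1 {e \<in> F. e \<subseteq> V1}" "is_face V2 {e \<in> F. e \<subseteq> V2}"
      using F_V by (auto intro!: is_face_subset[OF less.prems(3)] simp: edges_K_def)
    then obtain t1 t2 where
      t1: "admissible t1" "label t1 = V1" "{e \<in> F. e \<subseteq> V1} \<subseteq> edge_map t1" and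
      t2: "admissible t2" "label t2 = V2" "{e \<in> F. e \<subseteq> V2} \<subseteq> edge_map t2"
      using less.hyps card_parts_less finite_parts two_le_card_parts by meson
    have "admissible (Node V t1 t2)"
      unfolding admissible_Node_iff using t1 t2 card split by simp
    moreover have "F \<subseteq> insert {Min V, Max V} ({e \<in> F. e \<subseteq> V1} \<union> {e \<in> F. e \<subseteq> V2})"
      using sides by blast
    ultimately show ?thesis
      using t1 t2 by (intro exI[of _ "Node V t1 t2"]) auto
  qed
qed

section \<open>Recovering a tree from its edge set\<close>

lemma admissible_label_one_side:
  assumes "admissible t" "\<forall>e\<in>edge_map t. e \<subseteq> A \<or> e \<subseteq> B"
    and "A \<inter> B \<inter> label t \<subseteq> {Max (label t)}"
  shows "label t \<subseteq> A \<or> label t \<subseteq> B"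
  using assms
proof (induction t)
  case (Leaf X)
  then show ?case using card_2_Min_Max[of X] by (metis admissible.simps(1) edge_map_Leaf label.simps(1) singletonI)
next
  case (Node X t1 t2)
  note adm = admissible_NodeD[OF Node.prems(1)]
  interpret vertex_split X "label t1" "label t2" by (fact adm(2))
  have AB: "A \<inter> B \<inter> X \<subseteq> {Max X}" using Node.prems(3) by simp
  have "label t1 \<subseteq> A \<or> label t1 \<subseteq> B"
    using Node.IH(1) adm(3) Node.prems(2) AB parts_subset Max_in_second by auto
  moreover have "label t2 \<subseteq> A \<or> label t2 \<subseteq> B"
    using Node.IH(2) adm(4) Node.prems(2) AB parts_subset Max_second by auto
  moreover have "{Min X, Max X} \<subseteq> A \<or> {Min X, Max X} \<subseteq> B"
    using Node.prems(2) by simp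
  moreover have "X \<subseteq> C"
    if root: "{Min X, Max X} \<subseteq> C" and t1: "label t1 \<subseteq> C \<or> label t1 \<subseteq> D"
      and t2: "label t2 \<subseteq> C \<or> label t2 \<subseteq> D" and CD: "C \<inter> D \<inter> X \<subseteq> {Max X}" for C D
  proof -
    have "label t1 \<subseteq> C" using t1 root CD Min_in_first Min_neq_Max parts_subset by blast
    moreover have "label t2 \<subseteq> C"
      using t2 \<open>label t1 \<subseteq> C\<close> CD Max_first_in_both Max_first_neq parts_subset by blast
    ultimately show ?thesis using union by blast
  qed
  ultimately show ?case using AB by (metis Int_commute label.simps(2))
qed

lemma Max_label_first_child:
  assumes "admissible (Node X t1 t2)"
  shows "Max (label t1) = Max {y. {Min X, y} \<in> edge_map (Node X t1 t2) \<and> y \<noteq> Max X}"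
proof -
  note adm = admissible_NodeD[OF assms]
  interpret vertex_split X "label t1" "label t2" by (fact adm(2))
  define N where "N = {y. {Min X, y} \<in> edge_map (Node X t1 t2) \<and> y \<noteq> Max X}"
  have "N \<subseteq> X"
    using edge_map_subset_edges_K[OF assms] unfolding N_def edges_K_def
    by (auto simp del: edge_map_Node)
  then have "finite N" using finite finite_subset by blast
  moreover have "Max (label t1) \<in> N"
    using root_edge_in_edge_map[of t1] Min_first Max_first_neq unfolding N_def by simp
  moreover have "y \<le> Max (label t1)" if "y \<in> N" for y
  proof -
    have "{Min X, y} \<noteq> {Min X, Max X}"
      using that Min_neq_Max unfolding N_def by (auto simp: doubleton_eq_iff)
    then have "{Min X, y} \<in> edge_map t1 \<union> edge_map t2" using that unfolding N_def by auto
    moreover have "{Min X, y} \<notin> edge_map t2"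
      using edge_map_subset_edges_K[OF adm(4)] Min_in_first by (auto simp: edges_K_def)
    ultimately have "y \<in> label t1"
      using edge_map_subset_edges_K[OF adm(3)] by (auto simp: edges_K_def)
    then show ?thesis using finite_parts by simp
  qed
  ultimately show ?thesis unfolding N_def[symmetric] by (intro Max_eqI[symmetric])
qed

lemma first_child_label_subset:
  assumes adm_t: "admissible (Node X t1 t2)" and adm_s: "admissible (Node X s1 s2)"
    and eq: "edge_map (Node X t1 t2) = edge_map (Node X s1 s2)"
  shows "label t1 \<subseteq> label s1"
proof -
  note t = admissible_NodeD[OF adm_t] and s = admissible_NodeD[OF adm_s]
  have "Max (label t1) = Max (label s1)"
    using Max_label_first_child[OF adm_t] Max_label_first_child[OF adm_s] by (simp only: eq)
  then have "label s1 \<inter> label s2 \<inter> label t1 \<subseteq> {Max (label t1)}"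
    using vertex_split.inter[OF s(2)] by auto
  moreover have "\<forall>e\<in>edge_map t1. e \<subseteq> label s1 \<or> e \<subseteq> label s2"
  proof
    fix e assume e: "e \<in> edge_map t1"
    then have "e \<in> edges_K (label t1)" using edge_map_subset_edges_K[OF t(3)] by blast
    then have "e \<noteq> {Min X, Max X}" using vertex_split.root_edge_notin_edges_K(1)[OF t(2)] by blast
    moreover have "e \<in> edge_map (Node X s1 s2)" using e eq[symmetric] by simp
    ultimately have "e \<in> edge_map s1 \<union> edge_map s2" by simp
    then show "e \<subseteq> label s1 \<or> e \<subseteq> label s2"
      using edge_map_subset_edges_K[OF s(3)] edge_map_subset_edges_K[OF s(4)]
      by (auto simp: edges_K_def)
  qed
  ultimately have "label t1 \<subseteq> label s1 \<or> label t1 \<subseteq> label s2"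
    using admissible_label_one_side[OF t(3)] by blast
  moreover have "Min X \<in> label t1" "Min X \<notin> label s2"
    using vertex_split.Min_in_first[OF t(2)] vertex_split.Min_in_first[OF s(2)] by auto
  ultimately show ?thesis by blast
qed

lemma edge_map_inj:
  assumes "admissible T" "admissible T'" "label T = label T'" "edge_map T = edge_map T'"
  shows "T = T'"
  using assms
proof (induction T arbitrary: T')
  case (Leaf X)
  then show ?case by (cases T') (auto simp: admissible_Node_iff)
next
  case (Node X t1 t2)
  show ?case
  proof (cases T')
    case (Leaf Y)
    then show ?thesis using Node.prems by (auto simp: admissible_Node_iff)
  next
    case (Node Y s1 s2)
    then have Y: "Y = X" using Node.prems(3) by simp
    have adm_t: "admissible (Node X t1 t2)" and adm_s: "admissible (Node X s1 s2)"
      and eq: "edge_map (Node X t1 t2) = edge_map (Node X s1 s2)"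
      using Node.prems Node Y by simp_all
    note t = admissible_NodeD[OF adm_t] and s = admissible_NodeD[OF adm_s]
    have l1: "label t1 = label s1"
      using first_child_label_subset[OF adm_t adm_s eq] first_child_label_subset[OF adm_s adm_t eq[symmetric]]
      by blast
    have l2: "label t2 = label s2"
      using vertex_split.second_eq[OF t(2)] vertex_split.second_eq[OF s(2)] l1 by simp
    have "edge_map t1 = edge_map s1"
      by (subst edge_map_child_eq(1)[OF adm_t], subst edge_map_child_eq(1)[OF adm_s]) (simp only: eq l1)
    then have "t1 = s1" using Node.IH(1) t(3) s(3) l1 by blast
    have "edge_map t2 = edge_map s2"
      by (subst edge_map_child_eq(2)[OF adm_t], subst edge_map_child_eq(2)[OF adm_s]) (simp only: eq l2)
    then have "t2 = s2" using Node.IH(2) t(4) s(4) l2 by blast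
    then show ?thesis using \<open>t1 = s1\<close> Node Y by simp
  qed
qed

section \<open>Facets\<close>

lemma edge_map_in_facets:
  assumes "T \<in> Adm V"
  shows "edge_map T \<in> facets V"
proof -
  have T: "admissible T" "label T = V" using assms by (simp_all add: Adm_def)
  then have V: "finite V" "2 \<le> card V" using admissible_card_label card_ge_0_finite by force+
  have "G = edge_map T" if G: "is_face V G" "edge_map T \<subseteq> G" for G
  proof -
    obtain T' where T': "admissible T'" "label T' = V" "G \<subseteq> edge_map T'"
      using face_subset_edge_map[OF V G(1)] by blast
    have "card (edge_map T) = card (edge_map T')"
      using card_edge_map T T' by (metis add_right_cancel)
    then have "edge_map T = edge_map T'"
      using G(2) T'(3) card_subset_eq[OF finite_edge_map] by blast
    then show ?thesis using G(2) T'(3) by blast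
  qed
  then show ?thesis using is_face_edge_map[OF T(1)] T(2) by (simp add: facets_def)
qed

lemma facets_subset_edge_map_image:
  assumes "finite V" "2 \<le> card V"
  shows "facets V \<subseteq> edge_map ` Adm V"
proof
  fix F assume F: "F \<in> facets V"
  then obtain T where T: "admissible T" "label T = V" "F \<subseteq> edge_map T"
    using face_subset_edge_map[OF assms] by (auto simp: facets_def)
  then have "edge_map T = F"
    using F is_face_edge_map[OF T(1)] by (auto simp: facets_def)
  then show "F \<in> edge_map ` Adm V" using T by (auto simp: Adm_def)
qed

theorem theorem6p4:
  fixes V :: "nat set"
  assumes "finite V" and "card V \<ge> 2"
  shows "bij_betw edge_map (Adm V) (facets V)"
proof (rule bij_betw_imageI)
  show "inj_on edge_map (Adm V)"
    by (rule inj_onI) (auto simp: Adm_def intro: edge_map_inj)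
  show "edge_map ` Adm V = facets V"
    using edge_map_in_facets facets_subset_edge_map_image[OF assms] by blast
qed

end
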